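(* Let $p\ge1$ and let $\hat K_x,\check K_x,\hat K_y,\check K_y,D$ be $p\times p$ matrices independent of location. Consider the full-domain 2D lattice system $$\partial_t\mathbf v_{i,j}=\delta_i(\hat K_xE_i^{1/2}-\check K_xE_i^{-1/2})\mathbf v_{i,j}+\delta_j(\hat K_yE_j^{1/2}-\check K_yE_j^{-1/2})\mathbf v_{i,j}+D\mathbf v_{i,j},$$ and the patch scheme in which the same equation holds for $\mathbf v^{I,J}_{i,j}\in\mathbb R^p$ at interior points $i=1,\dots,n_x$, $j=1,\dots,n_y$ of each patch $(I,J)$ (macroscale spacings $H_x,H_y$, widths $h_x=n_xd_x=r_xH_x$, $h_y=n_yd_y=r_yH_y$), with edge values $$\mathbf v^{I,J}_{n_x+1,j}=E_x^{r_x}\mathbf v^{I,J}_{1,j},\ \mathbf v^{I,J}_{0,j}=E_x^{-r_x}\mathbf v^{I,J}_{n_x,j},\qquad \mathbf v^{I,J}_{i,n_y+1}=E_y^{r_y}\mathbf v^{I,J}_{i,1},\ \mathbf v^{I,J}_{i,0}=E_y^{-r_y}\mathbf v^{I,J}_{i,n_y}.$$ Interpreting operators formally on smooth fields interpolating the patch values, with $E_i=\exp(d_x\partial_x)$, $E_j=\exp(d_y\partial_y)$, $E_x=\exp(H_x\partial_x)$, $E_y=\exp(H_y\partial_y)$ (so exact inter-patch shifts give $E_x^{\pm r_x/2}=E_i^{\pm n_x/2}$, $E_y^{\pm r_y/2}=E_j^{\pm n_y/2}$), the mid-patch values $\mathbf V^{I,J}:=\mathbf v^{I,J}_{(n_x+1)/2,(n_y+1)/2}$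 satisfy $$\partial_t\mathbf V^{I,J}=\delta_i(\hat K_xE_i^{1/2}-\check K_xE_i^{-1/2})\mathbf V^{I,J}+\delta_j(\hat K_yE_j^{1/2}-\check K_yE_j^{-1/2})\mathbf V^{I,J}+D\mathbf V^{I,J},$$ the same operator as the full-domain microscale system. That is, the macroscale of the 2D patch scheme is consistent (to arbitrarily high order) with the full-domain microscale dynamics, errors arising only from approximating the inter-patch shifts.
   Context: $E_i,E_j$ are microscale shifts by one lattice step in $x$ and $y$, $\delta_i:=E_i^{1/2}-E_i^{-1/2}$, $\delta_j:=E_j^{1/2}-E_j^{-1/2}$, so $\delta_iE_i^{1/2}\mathbf v_{i,j}=\mathbf v_{i+1,j}-\mathbf v_{i,j}$ and $\delta_iE_i^{-1/2}\mathbf v_{i,j}=\mathbf v_{i,j}-\mathbf v_{i-1,j}$ (similarly in $j$). $E_x^{\pm r_x}$, $E_y^{\pm r_y}$ are macroscale shifts by one patch width in $x$, $y$, realised in practice by spectral or Lagrangian interpolation through the patches. Such a system arises as the homogeneous ensemble of all $p=p_xp_y$ phase-shifts of the 2D heterogeneous lattice diffusion with $p_x$-, $p_y$-periodic diffusivities. *)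

theory Defs
  imports "HOL-Analysis.Analysis"
begin

definition ctr :: "nat \<Rightarrow> real" where
  "ctr n = (real n + 1) / 2"

text \<open>Right-hand side of the microscale lattice operator
  delta_i (Khx E_i^(1/2) - Kcx E_i^(-1/2)) v + delta_j (Khy E_j^(1/2) - Kcy E_j^(-1/2)) v + D v,
  written out in terms of the centre value c and its east/west/north/south neighbours.\<close>
definition micro_rhs ::
  "real^'p^'p \<Rightarrow> real^'p^'p \<Rightarrow> real^'p^'p \<Rightarrow> real^'p^'p \<Rightarrow> real^'p^'p \<Rightarrow>
   real^'p \<Rightarrow> real^'p \<Rightarrow> real^'p \<Rightarrow> real^'p \<Rightarrow> real^'p \<Rightarrow> real^'p" where
  "micro_rhs Khx Kcx Khy Kcy D c e w n s =
     Khx *v (e - c) - Kcx *v (c - w) + Khy *v (n - c) - Kcy *v (c - s) + D *v c"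

text \<open>Interior patch values: the patch centred at macroscale position (X,Y), micro index (i,j),
  sampled from the smooth field u (time t, space x y), with E_i = exp(dx d/dx), E_j = exp(dy d/dy).\<close>
definition vin :: "(real \<Rightarrow> real \<Rightarrow> real \<Rightarrow> real^'p) \<Rightarrow> real \<Rightarrow> real \<Rightarrow> nat \<Rightarrow> nat \<Rightarrow>
    real \<Rightarrow> real \<Rightarrow> nat \<Rightarrow> nat \<Rightarrow> real \<Rightarrow> real^'p" where
  "vin u dx dy nx ny X Y i j t = u t (X + (real i - ctr nx) * dx) (Y + (real j - ctr ny) * dy)"

text \<open>Edge values are given by the exact macroscale
  shifts E_x^(+-rx) = exp(+-rx Hx d/dX), E_y^(+-ry) of interior patch values:
  v_{nx+1,j} = E_x^rx v_{1,j}, v_{0,j} = E_x^(-rx) v_{nx,j}, v_{i,ny+1} = E_y^ry v_{i,1},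
  v_{i,0} = E_y^(-ry) v_{i,ny}.  Corner values are never used (set to 0).\<close>
definition pv :: "(real \<Rightarrow> real \<Rightarrow> real \<Rightarrow> real^'p) \<Rightarrow> real \<Rightarrow> real \<Rightarrow> nat \<Rightarrow> nat \<Rightarrow>
    real \<Rightarrow> real \<Rightarrow> real \<Rightarrow> real \<Rightarrow> real \<Rightarrow> real \<Rightarrow> nat \<Rightarrow> nat \<Rightarrow> real \<Rightarrow> real^'p" where
  "pv u dx dy nx ny Hx Hy rx ry X Y i j t =
    (if 1 \<le> i \<and> i \<le> nx \<and> 1 \<le> j \<and> j \<le> ny then vin u dx dy nx ny X Y i j t
     else if i = nx + 1 \<and> 1 \<le> j \<and> j \<le> ny then vin u dx dy nx ny (X + rx * Hx) Y 1 j t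
     else if i = 0 \<and> 1 \<le> j \<and> j \<le> ny then vin u dx dy nx ny (X - rx * Hx) Y nx j t
     else if j = ny + 1 \<and> 1 \<le> i \<and> i \<le> nx then vin u dx dy nx ny X (Y + ry * Hy) i 1 t
     else if j = 0 \<and> 1 \<le> i \<and> i \<le> nx then vin u dx dy nx ny X (Y - ry * Hy) i ny t
     else 0)"

text \<open>Mid-patch value V = v_{(nx+1)/2,(ny+1)/2} of the patch centred at (X,Y).\<close>
definition Vmid :: "(real \<Rightarrow> real \<Rightarrow> real \<Rightarrow> real^'p) \<Rightarrow> real \<Rightarrow> real \<Rightarrow> nat \<Rightarrow> nat \<Rightarrow>
    real \<Rightarrow> real \<Rightarrow> real \<Rightarrow> real^'p" where
  "Vmid u dx dy nx ny X Y t =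
     u t (X + (ctr nx - ctr nx) * dx) (Y + (ctr ny - ctr ny) * dy)"

end

theory Submission
  imports Defs
begin

text \<open>With exact inter-patch shifts every patch value, edge values included, is a sample of the
  one smooth field at its microscale position: the shift E_x^(r_x) moves by r_x H_x = n_x d_x,
  exactly the distance from the last interior point to the first point beyond the patch.  So the
  patch equation at an interior point is the full-domain lattice equation for the field there; since
  a patch may be centred anywhere, the field obeys that equation everywhere, in particular at the
  patch centre, where it equals the mid-patch value.\<close>

lemma Vmid_eq_field: "Vmid u dx dy nx ny X Y t = u t X Y"
  by (simp add: Vmid_def)

lemma pv_row_eq_field:
  assumes "real nx * dx = rx * Hx" and "i \<le> nx + 1" and "1 \<le> j" and "j \<le> ny"
  shows "pv u dx dy nx ny Hx Hy rx ry X Y i j t =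
    u t (X + (real i - ctr nx) * dx) (Y + (real j - ctr ny) * dy)"
proof -
  consider "i = 0" | "1 \<le> i \<and> i \<le> nx" | "i = nx + 1"
    using assms(2) by linarith
  then show ?thesis
    using assms by cases (auto simp: pv_def vin_def algebra_simps)
qed

lemma pv_column_eq_field:
  assumes "real ny * dy = ry * Hy" and "j \<le> ny + 1" and "1 \<le> i" and "i \<le> nx"
  shows "pv u dx dy nx ny Hx Hy rx ry X Y i j t =
    u t (X + (real i - ctr nx) * dx) (Y + (real j - ctr ny) * dy)"
proof -
  consider "j = 0" | "1 \<le> j \<and> j \<le> ny" | "j = ny + 1"
    using assms(2) by linarith
  then show ?thesis
    using assms by cases (auto simp: pv_def vin_def algebra_simps)
qed

lemma field_lattice_equation:
  assumes "nx \<ge> 1" and "ny \<ge> 1"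
    and shift_x: "real nx * dx = rx * Hx" and shift_y: "real ny * dy = ry * Hy"
    and patch: "\<And>X Y i j t. 1 \<le> i \<Longrightarrow> i \<le> nx \<Longrightarrow> 1 \<le> j \<Longrightarrow> j \<le> ny \<Longrightarrow>
      ((\<lambda>s. pv u dx dy nx ny Hx Hy rx ry X Y i j s) has_vector_derivative
        micro_rhs Khx Kcx Khy Kcy D
          (pv u dx dy nx ny Hx Hy rx ry X Y i j t)
          (pv u dx dy nx ny Hx Hy rx ry X Y (i + 1) j t)
          (pv u dx dy nx ny Hx Hy rx ry X Y (i - 1) j t)
          (pv u dx dy nx ny Hx Hy rx ry X Y i (j + 1) t)
          (pv u dx dy nx ny Hx Hy rx ry X Y i (j - 1) t)) (at t)"
  shows "((\<lambda>s. u s x y) has_vector_derivative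
    micro_rhs Khx Kcx Khy Kcy D (u t x y) (u t (x + dx) y) (u t (x - dx) y)
      (u t x (y + dy)) (u t x (y - dy))) (at t)"
proof -
  \<comment> \<open>Use the patch whose interior point (1,1) lies at (x,y); its west and south neighbours
    are edge values.\<close>
  define X where "X = x - (1 - ctr nx) * dx"
  define Y where "Y = y - (1 - ctr ny) * dy"
  let ?v = "pv u dx dy nx ny Hx Hy rx ry X Y"
  have "?v i j s = u s (x + (real i - 1) * dx) (y + (real j - 1) * dy)"
    if "i \<le> nx + 1" "1 \<le> j" "j \<le> ny" for i j s
    using shift_x that by (simp add: pv_row_eq_field X_def Y_def algebra_simps)
  moreover have "?v 1 j s = u s x (y + (real j - 1) * dy)" if "j \<le> ny + 1" for j s
    using shift_y that \<open>nx \<ge> 1\<close> by (simp add: pv_column_eq_field X_def Y_def algebra_simps)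
  ultimately show ?thesis
    using patch[of 1 1 X Y t] assms(1,2) by simp
qed

theorem theorem8:
  fixes Khx Kcx Khy Kcy D :: "real^'p^'p"
    and u :: "real \<Rightarrow> real \<Rightarrow> real \<Rightarrow> real^'p"
    and dx dy Hx Hy rx ry :: real
    and nx ny :: nat
  assumes "dx > 0" and "dy > 0" and "Hx > 0" and "Hy > 0" and "rx > 0" and "ry > 0"
    and "nx \<ge> 1" and "ny \<ge> 1"
    and "real nx * dx = rx * Hx" and "real ny * dy = ry * Hy"
    and patch: "\<And>X Y i j t. 1 \<le> i \<Longrightarrow> i \<le> nx \<Longrightarrow> 1 \<le> j \<Longrightarrow> j \<le> ny \<Longrightarrow>
      ((\<lambda>s. pv u dx dy nx ny Hx Hy rx ry X Y i j s) has_vector_derivative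
        micro_rhs Khx Kcx Khy Kcy D
          (pv u dx dy nx ny Hx Hy rx ry X Y i j t)
          (pv u dx dy nx ny Hx Hy rx ry X Y (i + 1) j t)
          (pv u dx dy nx ny Hx Hy rx ry X Y (i - 1) j t)
          (pv u dx dy nx ny Hx Hy rx ry X Y i (j + 1) t)
          (pv u dx dy nx ny Hx Hy rx ry X Y i (j - 1) t)) (at t)"
  shows "\<forall>X Y t.
      ((\<lambda>s. Vmid u dx dy nx ny X Y s) has_vector_derivative
        micro_rhs Khx Kcx Khy Kcy D
          (Vmid u dx dy nx ny X Y t)
          (Vmid u dx dy nx ny (X + dx) Y t)
          (Vmid u dx dy nx ny (X - dx) Y t)
          (Vmid u dx dy nx ny X (Y + dy) t)
          (Vmid u dx dy nx ny X (Y - dy) t)) (at t)"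
  unfolding Vmid_eq_field
  using field_lattice_equation[OF assms(7-10) patch] by blast

end
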